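(* Let $\mathcal G=((V,E),(V_1,V_2,V_\Diamond),\delta,w)$ be a stochastic game and $\varphi$ a bounded prefix-independent objective. Consider the classes of the expected value vector $\mathsf r^*=(\mathbb{E}_v(\varphi))_{v\in V}$, and suppose exactly $m\ge1$ of them contain boundary vertices. Index the classes as $C_1,\dots,C_k$ with values $\bar r_1,\dots,\bar r_k$ so that $C_1,\dots,C_m$ are those containing boundary vertices, in increasing order of value, and $C_{m+1},\dots,C_k$ are those without boundary vertices, in increasing order of value. Let $B_0$ be a positive integer such that each of $\bar r_{m+1},\dots,\bar r_k$ can be written as $p/q$ with integers $p,q$, $0<q\le B_0$. For $1\le i\le m$ fix a boundary vertex $u_i$ of $C_i$ and for $1\le j\le k$ let $p_{i,j}=\sum_{v'\in E(u_i)\cap C_j}\delta(u_i)(v')$. Let $Q_B=(p_{i,j})_{1\le i,j\le m}$, $Q_C=(p_{i,j})_{1\le i\le m,\,m+1\le j\le k}$, $\bar r_C=(\bar r_{m+1},\dots,\bar r_k)^{T}$, $I$ the $m\times m$ identity matrix, and $\alpha$ the least common multiple of the denominators of the $p_{i,j}$ ($1\le i\le m$, $1\le j\le k$). For $1\le i\le m$ let $N_i$ be the determinant of the matrix obtained from $\alpha(I-Q_B)$ by replacing its $i$-th column with the column vector $\alpha Q_C\bar r_C$. Then, written in lowest terms, $N_i$ has denominator at most $B_0^{k-m}\le B_0^{|V|}$.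
   Context: A stochastic game is $\mathcal{G}=((V,E),(V_1,V_2,V_\Diamond),\delta,w)$: a finite directed graph $(V,E)$ in which every vertex $v$ has a nonempty out-neighbour set $E(v)$, a partition of $V$ into Player 1, Player 2 and probabilistic vertices, a function $\delta$ giving each $v\in V_\Diamond$ a rational probability distribution $\delta(v)$ on $E(v)$, positive on every out-neighbour, and payoffs $w:E\to\mathbb{Q}$. Plays are infinite paths; deterministic strategies of Player $i$ map finite prefixes ending in $V_i$ to an out-neighbour of the last vertex; a strategy pair and initial vertex induce a probability measure on plays. An objective $\varphi$ is a Borel-measurable real function on plays; bounded if $|\varphi|\le W_\varphi$ for an integer $W_\varphi$; prefix-independent if plays with a common suffix get equal value. $\mathbb{E}_v(\varphi)=\sup_{\sigma_1}\inf_{\sigma_2}\mathbb{E}^{\sigma_1,\sigma_2}_v[\varphi]=\inf_{\sigma_2}\sup_{\sigma_1}\mathbb{E}^{\sigma_1,\sigma_2}_v[\varphi]$ (Player 1 maximises, Player 2 minimises). For a real vector $\mathsf r$ indexed by $V$, its classes are the maximal nonempty sets of vertices on which $\mathsf r$ is constant (the constant being the class value); a vertex $v$ of class $C$ is a boundary vertex if $v\in V_\Diamond$ and $E(v)\not\subseteq C$. *)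

theory Defs
  imports "HOL-Probability.Probability" "Jordan_Normal_Form.Determinant"
begin

record 'v sgame =
  gV  :: "'v set"
  gE  :: "('v \<times> 'v) set"
  gV1 :: "'v set"
  gV2 :: "'v set"
  gVP :: "'v set"
  gdelta :: "'v \<Rightarrow> 'v \<Rightarrow> rat"
  gw  :: "'v \<times> 'v \<Rightarrow> rat"

definition succs :: "'v sgame \<Rightarrow> 'v \<Rightarrow> 'v set" where
  "succs G v = {u. (v, u) \<in> gE G}"

definition wf_sgame :: "'v sgame \<Rightarrow> bool" where
  "wf_sgame G \<longleftrightarrow>
     finite (gV G) \<and> gE G \<subseteq> gV G \<times> gV G \<and>
     (\<forall>v\<in>gV G. succs G v \<noteq> {}) \<and>
     gV1 G \<union> gV2 G \<union> gVP G = gV G \<and>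
     gV1 G \<inter> gV2 G = {} \<and> gV1 G \<inter> gVP G = {} \<and> gV2 G \<inter> gVP G = {} \<and>
     (\<forall>v\<in>gVP G. (\<forall>u\<in>succs G v. gdelta G v u > 0) \<and>
                  (\<forall>u. u \<notin> succs G v \<longrightarrow> gdelta G v u = 0) \<and>
                  (\<Sum>u\<in>succs G v. gdelta G v u) = 1)"

definition is_play :: "'v sgame \<Rightarrow> 'v stream \<Rightarrow> bool" where
  "is_play G s \<longleftrightarrow> s !! 0 \<in> gV G \<and> (\<forall>n. (s !! n, s !! Suc n) \<in> gE G)"

definition strategies :: "'v sgame \<Rightarrow> 'v set \<Rightarrow> ('v list \<Rightarrow> 'v) set" where
  "strategies G Vi = {\<sigma>. \<forall>h. h \<noteq> [] \<and> last h \<in> Vi \<longrightarrow> (last h, \<sigma> h) \<in> gE G}"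

definition trans_prob :: "'v sgame \<Rightarrow> ('v list \<Rightarrow> 'v) \<Rightarrow> ('v list \<Rightarrow> 'v) \<Rightarrow> 'v list \<Rightarrow> 'v \<Rightarrow> real" where
  "trans_prob G \<sigma>1 \<sigma>2 h u =
     (if last h \<in> gV1 G then (if \<sigma>1 h = u then 1 else 0)
      else if last h \<in> gV2 G then (if \<sigma>2 h = u then 1 else 0)
      else real_of_rat (gdelta G (last h) u))"

definition cyl_prob :: "'v sgame \<Rightarrow> ('v list \<Rightarrow> 'v) \<Rightarrow> ('v list \<Rightarrow> 'v) \<Rightarrow> 'v \<Rightarrow> 'v list \<Rightarrow> real" where
  "cyl_prob G \<sigma>1 \<sigma>2 v h =
     (if h = [] then 1
      else (if hd h = v then 1 else 0) *
           (\<Prod>i<length h - 1. trans_prob G \<sigma>1 \<sigma>2 (take (Suc i) h) (h ! Suc i)))"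

(* the probability measure on plays induced by a strategy pair and initial vertex
   (unique by Caratheodory; exists by Ionescu-Tulcea) *)
definition play_measure :: "'v sgame \<Rightarrow> ('v list \<Rightarrow> 'v) \<Rightarrow> ('v list \<Rightarrow> 'v) \<Rightarrow> 'v \<Rightarrow> 'v stream measure" where
  "play_measure G \<sigma>1 \<sigma>2 v = (SOME M.
      sets M = sets (stream_space (count_space UNIV)) \<and> prob_space M \<and>
      (\<forall>h. emeasure M {s \<in> space M. stake (length h) s = h} = ennreal (cyl_prob G \<sigma>1 \<sigma>2 v h)))"

definition expected :: "'v sgame \<Rightarrow> ('v stream \<Rightarrow> real) \<Rightarrow> ('v list \<Rightarrow> 'v) \<Rightarrow> ('v list \<Rightarrow> 'v) \<Rightarrow> 'v \<Rightarrow> real" where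
  "expected G \<phi> \<sigma>1 \<sigma>2 v = integral\<^sup>L (play_measure G \<sigma>1 \<sigma>2 v) \<phi>"

definition game_value :: "'v sgame \<Rightarrow> ('v stream \<Rightarrow> real) \<Rightarrow> 'v \<Rightarrow> real" where
  "game_value G \<phi> v =
     (SUP \<sigma>1\<in>strategies G (gV1 G). INF \<sigma>2\<in>strategies G (gV2 G). expected G \<phi> \<sigma>1 \<sigma>2 v)"

definition objective :: "'v sgame \<Rightarrow> ('v stream \<Rightarrow> real) \<Rightarrow> bool" where
  "objective G \<phi> \<longleftrightarrow> \<phi> \<in> borel_measurable (stream_space (count_space UNIV))"

definition bounded_obj :: "'v sgame \<Rightarrow> ('v stream \<Rightarrow> real) \<Rightarrow> bool" where
  "bounded_obj G \<phi> \<longleftrightarrow> (\<exists>W::int. \<forall>s. is_play G s \<longrightarrow> \<bar>\<phi> s\<bar> \<le> of_int W)"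

definition prefix_independent :: "'v sgame \<Rightarrow> ('v stream \<Rightarrow> real) \<Rightarrow> bool" where
  "prefix_independent G \<phi> \<longleftrightarrow>
     (\<forall>s t i j. is_play G s \<and> is_play G t \<and> sdrop i s = sdrop j t \<longrightarrow> \<phi> s = \<phi> t)"

definition value_classes :: "'v sgame \<Rightarrow> ('v \<Rightarrow> real) \<Rightarrow> 'v set set" where
  "value_classes G r = {{u \<in> gV G. r u = r v} | v. v \<in> gV G}"

definition boundary_vertex :: "'v sgame \<Rightarrow> 'v set \<Rightarrow> 'v \<Rightarrow> bool" where
  "boundary_vertex G C v \<longleftrightarrow> v \<in> C \<and> v \<in> gVP G \<and> \<not> succs G v \<subseteq> C"

end

theory Submission
  imports Defs
begin

(* Multiplying by alpha clears all
   denominators of the p_{i,j}, so alpha (I - Q_B) is an integer matrix, and with D the product of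
   denominators q_j <= B0 of the values in r_C also D alpha Q_C r_C is an integer vector.  Expanding
   the determinant along the replaced column shows D N_i is an integer, so the denominator of N_i
   divides D <= B0^(k-m); finally k - m <= k <= |V| since distinct classes have distinct representatives. *)

lemma quotient_of_denom_dvd:
  assumes "x = of_int n / of_int d" "0 < d"
  shows "snd (quotient_of x) dvd d"
proof -
  obtain a b where ab: "quotient_of x = (a, b)" by (cases "quotient_of x") auto
  have "b > 0" using quotient_of_denom_pos[OF ab] .
  with assms have "of_int (a * d) = (of_int (n * b) :: rat)"
    using quotient_of_div[OF ab] by (simp add: field_simps)
  then have "b dvd a * d" by (metis dvd_triv_right of_int_eq_iff)
  with quotient_of_coprime[OF ab] have "b dvd d"
    by (simp add: coprime_commute coprime_dvd_mult_right_iff)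
  with ab show ?thesis by simp
qed

lemma of_int_mult_of_rat_in_Ints:
  assumes "snd (quotient_of x) dvd N"
  shows "(of_int N * of_rat x :: 'a :: field_char_0) \<in> \<int>"
proof -
  obtain a b where ab: "quotient_of x = (a, b)" by (cases "quotient_of x") auto
  obtain t where "N = b * t" using assms ab by (auto elim: dvdE)
  with quotient_of_denom_pos[OF ab] have "of_int N * x = of_int (a * t)"
    using quotient_of_div[OF ab] by (simp add: field_simps)
  then have "of_int N * of_rat x = (of_int (a * t) :: 'a)"
    by (metis of_rat_mult of_rat_of_int_eq)
  then show ?thesis by simp
qed

lemma common_denominator_le_power:
  fixes r :: "'a \<Rightarrow> 'b :: field_char_0" and B :: int
  assumes "finite J" and "\<forall>j\<in>J. \<exists>p q::int. 0 < q \<and> q \<le> B \<and> r j = of_int p / of_int q"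
  obtains D :: int where "0 < D" "D \<le> B ^ card J" "\<And>j. j \<in> J \<Longrightarrow> of_int D * r j \<in> \<int>"
proof -
  obtain P Q where PQ: "\<And>j. j \<in> J \<Longrightarrow> 0 < Q j \<and> Q j \<le> B \<and> r j = of_int (P j) / of_int (Q j)"
    using assms(2) by metis
  define D where "D = (\<Prod>j\<in>J. Q j)"
  have "0 < D" unfolding D_def using PQ by (intro prod_pos) auto
  moreover have "D \<le> B ^ card J"
  proof -
    have "D \<le> (\<Prod>j\<in>J. B)"
      unfolding D_def using PQ by (intro prod_mono) (auto simp: less_imp_le)
    then show ?thesis by simp
  qed
  moreover have "of_int D * r j \<in> \<int>" if j: "j \<in> J" for j
  proof -
    have "D = Q j * (\<Prod>j'\<in>J - {j}. Q j')"
      unfolding D_def using assms(1) j by (simp add: prod.remove)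
    with PQ[OF j] have "of_int D * r j = of_int (P j * (\<Prod>j'\<in>J - {j}. Q j'))"
      by simp
    then show ?thesis by (simp only: Ints_of_int)
  qed
  ultimately show thesis by (rule that)
qed

lemma det_in_Ints:
  fixes A :: "'a :: comm_ring_1 mat"
  assumes "A \<in> carrier_mat n n" and "\<And>a b. a < n \<Longrightarrow> b < n \<Longrightarrow> A $$ (a, b) \<in> \<int>"
  shows "det A \<in> \<int>"
proof -
  have "signof p * (\<Prod>a = 0..<n. A $$ (a, p a)) \<in> \<int>" if "p permutes {0..<n}" for p
    using assms(2) permutes_in_image[OF that]
    by (intro Ints_mult Ints_prod) (auto simp: sign_def)
  then show ?thesis
    using assms(1) unfolding det_def by (auto intro: Ints_sum)
qed

lemma det_replace_col_zero:
  assumes "A \<in> carrier_mat n n" and "i < n"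
  shows "det (replace_col A (0\<^sub>v n) i) = 0"
proof -
  have "A *\<^sub>v 0\<^sub>v n = 0\<^sub>v n"
    using assms(1) by (intro eq_vecI) (auto simp: scalar_prod_def)
  then show ?thesis
    using cramer_lemma_mat[OF assms(1) zero_carrier_vec assms(2)] assms(2) by simp
qed

lemma det_replace_col_mult_in_Ints:
  fixes A :: "'a :: comm_ring_1 mat" and c :: "'a Matrix.vec"
  assumes A: "A \<in> carrier_mat n n" and i: "i < n"
    and A_Ints: "\<And>a b. a < n \<Longrightarrow> b < n \<Longrightarrow> A $$ (a, b) \<in> \<int>"
    and c_Ints: "\<And>a. a < n \<Longrightarrow> D * c $ a \<in> \<int>"
  shows "D * det (replace_col A c i) \<in> \<int>"
proof -
  let ?M = "replace_col A c i"
  have M: "?M \<in> carrier_mat n n" using A by (auto simp: replace_col_def)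
  have cofactor_Ints: "cofactor ?M a i \<in> \<int>" if "a < n" for a
    unfolding cofactor_def using A i A_Ints
    by (intro Ints_mult det_in_Ints[where n = "n - 1"])
       (auto simp: mat_delete_def replace_col_def)
  have "D * det ?M = D * (\<Sum>a<n. ?M $$ (a, i) * cofactor ?M a i)"
    by (simp only: laplace_expansion_column[OF M i])
  also have "\<dots> = (\<Sum>a<n. (D * c $ a) * cofactor ?M a i)"
    using A i by (simp add: sum_distrib_left replace_col_def mult.assoc)
  also have "\<dots> \<in> \<int>"
    using c_Ints cofactor_Ints by (auto intro: Ints_sum Ints_mult)
  finally show ?thesis .
qed

lemma det_replace_col_rational:
  fixes A :: "'a :: field_char_0 mat" and c :: "'a Matrix.vec"
  assumes "A \<in> carrier_mat n n" and "i < n" and "0 < D"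
    and "\<And>a b. a < n \<Longrightarrow> b < n \<Longrightarrow> A $$ (a, b) \<in> \<int>"
    and "\<And>a. a < n \<Longrightarrow> of_int D * c $ a \<in> \<int>"
  shows "\<exists>x. det (replace_col A c i) = of_rat x \<and> snd (quotient_of x) dvd D"
proof -
  obtain z where z: "of_int D * det (replace_col A c i) = of_int z"
    using det_replace_col_mult_in_Ints[OF assms(1,2,4,5)] by (auto elim: Ints_cases)
  define x where "x = (of_int z / of_int D :: rat)"
  have "det (replace_col A c i) = of_rat x"
    unfolding x_def using z \<open>0 < D\<close> by (simp add: of_rat_divide field_simps)
  moreover have "snd (quotient_of x) dvd D"
    using quotient_of_denom_dvd[OF x_def \<open>0 < D\<close>] .
  ultimately show ?thesis by blast
qed

lemma card_value_classes_le:
  assumes "finite (gV G)"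
  shows "card (value_classes G r) \<le> card (gV G)"
proof -
  have "value_classes G r = (\<lambda>v. {u \<in> gV G. r u = r v}) ` gV G"
    unfolding value_classes_def by auto
  then show ?thesis using card_image_le[OF assms] by simp
qed

lemma scaled_system_cramer_numerator_denom_dvd:
  fixes p :: "nat \<Rightarrow> nat \<Rightarrow> rat" and r :: "nat \<Rightarrow> 'a :: field_char_0" and \<alpha> D :: int
  assumes A_def: "A = mat m m (\<lambda>(a, b). of_int \<alpha> *
               ((if a = b then 1 else 0) - of_rat (p (a + 1) (b + 1))))"
    and c_def: "c = vec m (\<lambda>a. of_int \<alpha> * (\<Sum>j\<in>{m+1..k}. of_rat (p (a + 1) j) * r j))"
    and "0 < D" and "i < m"
    and \<alpha>_dvd: "\<And>a j. a \<in> {1..m} \<Longrightarrow> j \<in> {1..k} \<Longrightarrow> snd (quotient_of (p a j)) dvd \<alpha>"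
    and D_r: "\<And>j. j \<in> {m+1..k} \<Longrightarrow> of_int D * r j \<in> \<int>"
  shows "\<exists>x. det (replace_col A c i) = of_rat x \<and> snd (quotient_of x) dvd D"
proof (cases "m \<le> k")
  case True
  have A: "A \<in> carrier_mat m m" unfolding A_def by simp
  have \<alpha>_p: "of_int \<alpha> * (of_rat (p a j) :: 'a) \<in> \<int>" if "a \<in> {1..m}" "j \<in> {1..k}" for a j
    using \<alpha>_dvd[OF that] by (rule of_int_mult_of_rat_in_Ints)
  have "A $$ (a, b) \<in> \<int>" if "a < m" "b < m" for a b
    using that True \<alpha>_p[of "a + 1" "b + 1"]
    by (auto simp: A_def right_diff_distrib intro: Ints_diff)
  moreover have "of_int D * c $ a \<in> \<int>" if "a < m" for a
  proof -
    have "of_int D * c $ a =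
        (\<Sum>j\<in>{m+1..k}. (of_int \<alpha> * of_rat (p (a + 1) j)) * (of_int D * r j))"
      unfolding c_def using that by (simp add: sum_distrib_left ac_simps)
    also have "\<dots> \<in> \<int>"
      by (rule Ints_sum, rule Ints_mult) (use that D_r \<alpha>_p in auto)
    finally show ?thesis .
  qed
  ultimately show ?thesis by (rule det_replace_col_rational[OF A \<open>i < m\<close> \<open>0 < D\<close>])
next
  case False
  (* alpha need not clear the denominators of the columns of A beyond k, but c vanishes *)
  then have "c = 0\<^sub>v m" unfolding c_def by auto
  moreover have "A \<in> carrier_mat m m" unfolding A_def by simp
  ultimately show ?thesis using det_replace_col_zero \<open>i < m\<close> by (intro exI[of _ 0]) auto
qed

theorem proposition14:
  fixes G :: "'v sgame" and \<phi> :: "'v stream \<Rightarrow> real"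
    and k m :: nat and C :: "nat \<Rightarrow> 'v set" and rbar :: "nat \<Rightarrow> real"
    and B0 :: int and u :: "nat \<Rightarrow> 'v"
  assumes G: "wf_sgame G"
    and obj: "objective G \<phi>" and bnd: "bounded_obj G \<phi>" and pind: "prefix_independent G \<phi>"
    and m1: "1 \<le> m"
    and C_bij: "bij_betw C {1..k} (value_classes G (game_value G \<phi>))"
    and rbar_val: "\<forall>i\<in>{1..k}. \<forall>v\<in>C i. rbar i = game_value G \<phi> v"
    and bdry: "\<forall>i\<in>{1..k}. (\<exists>v. boundary_vertex G (C i) v) \<longleftrightarrow> i \<le> m"
    and incB: "strict_mono_on {1..m} rbar"
    and incC: "strict_mono_on {m+1..k} rbar"
    and B0: "0 < B0"
    and ratC: "\<forall>j\<in>{m+1..k}. \<exists>p q::int. 0 < q \<and> q \<le> B0 \<and> rbar j = of_int p / of_int q"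
    and u: "\<forall>i\<in>{1..m}. boundary_vertex G (C i) (u i)"
  shows
    "let p = (\<lambda>i j. \<Sum>v'\<in>succs G (u i) \<inter> C j. gdelta G (u i) v');
         \<alpha> = Lcm {snd (quotient_of (p i j)) | i j. i \<in> {1..m} \<and> j \<in> {1..k}};
         A = mat m m (\<lambda>(a, b). real_of_int \<alpha> *
               ((if a = b then 1 else 0) - real_of_rat (p (a + 1) (b + 1))));
         c = vec m (\<lambda>a. real_of_int \<alpha> *
               (\<Sum>j\<in>{m+1..k}. real_of_rat (p (a + 1) j) * rbar j));
         N = (\<lambda>i. det (replace_col A c (i - 1)))
     in \<forall>i\<in>{1..m}. \<exists>x::rat. N i = real_of_rat x \<and>
           snd (quotient_of x) \<le> B0 ^ (k - m) \<and> B0 ^ (k - m) \<le> B0 ^ card (gV G)"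
proof -
  define p where "p = (\<lambda>i j. \<Sum>v'\<in>succs G (u i) \<inter> C j. gdelta G (u i) v')"
  define \<alpha> where "\<alpha> = Lcm {snd (quotient_of (p i j)) | i j. i \<in> {1..m} \<and> j \<in> {1..k}}"
  define A where "A = mat m m (\<lambda>(a, b). real_of_int \<alpha> *
               ((if a = b then 1 else 0) - real_of_rat (p (a + 1) (b + 1))))"
  define c where "c = vec m (\<lambda>a. real_of_int \<alpha> *
               (\<Sum>j\<in>{m+1..k}. real_of_rat (p (a + 1) j) * rbar j))"
  have \<alpha>_dvd: "snd (quotient_of (p a j)) dvd \<alpha>" if "a \<in> {1..m}" "j \<in> {1..k}" for a j
    unfolding \<alpha>_def by (rule dvd_Lcm) (use that in blast)
  obtain D where D: "0 < D" "D \<le> B0 ^ (k - m)"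
    and D_rbar: "\<And>j. j \<in> {m+1..k} \<Longrightarrow> of_int D * rbar j \<in> \<int>"
    using common_denominator_le_power[OF _ ratC] by auto
  have "\<exists>x. det (replace_col A c (i - 1)) = of_rat x \<and> snd (quotient_of x) \<le> B0 ^ (k - m)"
    if i: "i \<in> {1..m}" for i
  proof -
    from i have "i - 1 < m" by auto
    then obtain x where "det (replace_col A c (i - 1)) = of_rat x" "snd (quotient_of x) dvd D"
      using scaled_system_cramer_numerator_denom_dvd[OF A_def c_def \<open>0 < D\<close> _ \<alpha>_dvd D_rbar]
      by blast
    with D show ?thesis by (meson order_trans zdvd_imp_le)
  qed
  moreover have "k \<le> card (gV G)"
    using bij_betw_same_card[OF C_bij] card_value_classes_le G by (auto simp: wf_sgame_def)
  then have "B0 ^ (k - m) \<le> B0 ^ card (gV G)"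
    using B0 by (intro power_increasing) auto
  ultimately show ?thesis
    unfolding Let_def p_def[symmetric] \<alpha>_def[symmetric] A_def[symmetric] c_def[symmetric]
    by blast
qed

end
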